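(* In the Standing Setup with $R=-v(X-w)$ ($v,w\in\mathbb F$), for every $h\in\mathbb Z$: $$d_{h-2}d_{h-1}^2d_h^3d_{h+1}^2d_{h+2}=-v^3\bigl((g+d_he_h)+w(f+d_h)+w^3\bigr)=v^2\,d_{h-1}d_h^2d_{h+1}-v^3\,(g+wf+w^3).$$
   Context: Standing Setup. $\mathbb F$ is a field of characteristic not $2$ or $3$; $f,g\in\mathbb F$; $A=X^3+fX+g\in\mathbb F[X]$; $R\in\mathbb F[X]$ is a polynomial of degree at most $2$; $D=A^2+4R$; $Y$ satisfies $Y^2=D(X)$, $Z=\tfrac12(Y+A)$ and $\overline Z=\tfrac12(-Y+A)$, so $Z+\overline Z=A$ and $Z\overline Z=-R$. We are given sequences $(u_h),(v_h),(w_h),(d_h),(e_h)$ of elements of $\mathbb F$ indexed by $h\in\mathbb Z$, with all $u_h\neq0$, such that for every $h\in\mathbb Z$ the following two identities hold in $\mathbb F[X]$: (i) $A+d_h(X+e_h)+d_{h+1}(X+e_{h+1})=(X+v_h)(X^2-v_hX+w_h)$; (ii) $-u_hu_{h+1}(X^2-v_hX+w_h)(X^2-v_{h+1}X+w_{h+1})=d_{h+1}^2(X+e_{h+1})^2+d_{h+1}(X+e_{h+1})A-R$. (These say that $Z_h=\bigl(Z+d_h(X+e_h)\bigr)/\bigl(u_h(X^2-v_hX+w_h)\bigr)$ are consecutive complete quotients of a continued fraction expansion with partial quotients $(X+v_h)/u_h$.) *)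

theory Defs
  imports "HOL-Computational_Algebra.Polynomial"
begin

definition cubicA :: "'a::comm_ring_1 \<Rightarrow> 'a \<Rightarrow> 'a poly" where
  "cubicA f g = [:g, f, 0, 1:]"

end

theory Submission
  imports Defs
begin

text \<open>Eliminating \<open>A\<close> between (i) and (ii) and comparing coefficients (here \<open>deg R \<le> 1\<close> is used)
  gives \<open>Q\<^sub>h\<^sub>+\<^sub>1 = P\<^sub>h\<^sub>+\<^sub>1 L\<^sub>h - d\<^sub>h\<close> and \<open>d\<^sub>h d\<^sub>h\<^sub>+\<^sub>1 (Q\<^sub>h - P\<^sub>h P\<^sub>h\<^sub>+\<^sub>1) = R\<close>.
  Evaluating the latter at \<open>-e\<^sub>h\<close> yields \<open>R(-e\<^sub>h) = -d\<^sub>h\<^sub>-\<^sub>1 d\<^sub>h d\<^sub>h\<^sub>+\<^sub>1\<close> and the mirror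
  relation \<open>Q\<^sub>h\<^sub>-\<^sub>1 = P\<^sub>h L\<^sub>h - d\<^sub>h\<^sub>+\<^sub>1\<close>; with (i) these show that \<open>R\<close> divides
  \<open>A + d\<^sub>h P\<^sub>h - P\<^sub>h\<^sub>-\<^sub>1 P\<^sub>h P\<^sub>h\<^sub>+\<^sub>1\<close>. For \<open>R = -v(X - w)\<close> the value at the root \<open>w\<close>,
  together with the three relations \<open>v(w + e\<^sub>k) = -d\<^sub>k\<^sub>-\<^sub>1 d\<^sub>k d\<^sub>k\<^sub>+\<^sub>1\<close> for \<open>k = h-1, h, h+1\<close>,
  gives the theorem.\<close>

locale complete_quotients =
  fixes f g :: "'a::field" and R :: "'a poly" and u vv ww d e :: "int \<Rightarrow> 'a"
  assumes degree_R: "degree R \<le> 1"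
    and u_nonzero: "u h \<noteq> 0"
    and iden_i: "cubicA f g + smult (d h) [:e h, 1:] + smult (d (h+1)) [:e (h+1), 1:]
                 = [:vv h, 1:] * [:ww h, - vv h, 1:]"
    and iden_ii: "- smult (u h * u (h+1)) ([:ww h, - vv h, 1:] * [:ww (h+1), - vv (h+1), 1:])
                 = smult ((d (h+1))\<^sup>2) ([:e (h+1), 1:]\<^sup>2) + smult (d (h+1)) [:e (h+1), 1:] * cubicA f g - R"
begin

definition P :: "int \<Rightarrow> 'a poly" where "P h = [:e h, 1:]"
definition Q :: "int \<Rightarrow> 'a poly" where "Q h = [:ww h, - vv h, 1:]"
definition L :: "int \<Rightarrow> 'a poly" where "L h = [:vv h, 1:]"

lemma cubic_eq_L_Q: "cubicA f g + smult (d h) (P h) + smult (d (h+1)) (P (h+1)) = L h * Q h"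
  using iden_i unfolding P_def Q_def L_def .

lemma coeff_R_eq_0: "n \<ge> 2 \<Longrightarrow> coeff R n = 0"
  using degree_R by (simp add: coeff_eq_0)

lemma d_succ_eq: "d (h+1) = - (u h * u (h+1))"
proof -
  have "coeff (- smult (u h * u (h+1)) ([:ww h, - vv h, 1:] * [:ww (h+1), - vv (h+1), 1:])) 4
      = coeff (smult ((d (h+1))\<^sup>2) ([:e (h+1), 1:]\<^sup>2) + smult (d (h+1)) [:e (h+1), 1:] * cubicA f g - R) 4"
    using iden_ii by simp
  then show ?thesis
    by (simp add: cubicA_def power2_eq_square eval_nat_numeral coeff_R_eq_0)
qed

lemma d_nonzero: "d h \<noteq> 0"
  using d_succ_eq[of "h-1"] u_nonzero by simp

text \<open>Turning scalar multiples into products with constants lets \<open>algebra\<close> treat the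
  polynomial identities below as identities in a commutative ring.\<close>

lemma smult_eq_const_mult: "smult c p = [:c:] * p"
  by simp

lemma Q_times_P_L_minus_Q:
  "smult (d (h+1)) (Q h * (P (h+1) * L h - Q (h+1))) = smult (d h * d (h+1)) (P h * P (h+1)) + R"
proof -
  have const_mult: "[:a * b:] = [:a:] * [:b:]" for a b :: 'a
    by simp
  have i: "cubicA f g + [:d h:] * P h + [:d (h+1):] * P (h+1) = L h * Q h"
    using cubic_eq_L_Q[of h] by (simp only: smult_eq_const_mult)
  have "smult (d (h+1)) (Q h * Q (h+1))
      = smult ((d (h+1))\<^sup>2) ((P (h+1))\<^sup>2) + smult (d (h+1)) (P (h+1)) * cubicA f g - R"
    using iden_ii[of h] unfolding P_def Q_def by (simp add: d_succ_eq)
  then have ii: "[:d (h+1):] * (Q h * Q (h+1))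
      = ([:d (h+1):] * P (h+1))\<^sup>2 + [:d (h+1):] * P (h+1) * cubicA f g - R"
    by (simp only: smult_eq_const_mult power2_eq_square const_mult ac_simps)
  have "[:d (h+1):] * (Q h * (P (h+1) * L h - Q (h+1))) = [:d h:] * [:d (h+1):] * (P h * P (h+1)) + R"
    using i ii by algebra
  then show ?thesis
    by (simp only: smult_eq_const_mult const_mult ac_simps)
qed

text \<open>\<open>P\<^sub>h\<^sub>+\<^sub>1 L\<^sub>h - Q\<^sub>h\<^sub>+\<^sub>1\<close> is linear, and the \<open>X\<^sup>3\<close> and \<open>X\<^sup>2\<close> coefficients of
  \<open>Q_times_P_L_minus_Q\<close>, to which \<open>R\<close> does not contribute, force it to be the constant \<open>d\<^sub>h\<close>.\<close>

lemma Q_succ: "Q (h+1) = P (h+1) * L h - [:d h:]"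
proof -
  define \<alpha> \<beta> where "\<alpha> = e (h+1) * vv h - ww (h+1)" and "\<beta> = e (h+1) + vv h + vv (h+1)"
  have diff: "P (h+1) * L h - Q (h+1) = [:\<alpha>, \<beta>:]"
    by (simp add: P_def Q_def L_def \<alpha>_def \<beta>_def algebra_simps)
  have coeffs: "coeff (smult (d (h+1)) (Q h * [:\<alpha>, \<beta>:])) n
              = coeff (smult (d h * d (h+1)) (P h * P (h+1)) + R) n" for n
    using Q_times_P_L_minus_Q[of h] unfolding diff by simp
  have R23: "coeff R 2 = 0" "coeff R 3 = 0"
    by (simp_all add: coeff_R_eq_0)
  have "d (h+1) * \<beta> = 0"
    using coeffs[of 3] R23 by (simp add: P_def Q_def eval_nat_numeral)
  then have "\<beta> = 0"
    using d_nonzero by simp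
  moreover have "d (h+1) * \<alpha> = d (h+1) * d h"
    using coeffs[of 2] R23 \<open>\<beta> = 0\<close> by (simp add: P_def Q_def eval_nat_numeral mult.commute)
  ultimately have "P (h+1) * L h - Q (h+1) = [:d h:]"
    using diff d_nonzero by simp
  then show ?thesis
    by (metis diff_diff_eq2 add_diff_cancel_left')
qed

lemma smult_Q_minus_P_P_eq_R: "smult (d h * d (h+1)) (Q h - P h * P (h+1)) = R"
proof -
  have "P (h+1) * L h - Q (h+1) = [:d h:]"
    by (simp add: Q_succ)
  with Q_times_P_L_minus_Q[of h]
  have "smult (d h * d (h+1)) (Q h) = smult (d h * d (h+1)) (P h * P (h+1)) + R"
    by (simp add: ac_simps)
  then show ?thesis
    unfolding smult_diff_right by (simp only: add_diff_cancel_left')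
qed

lemma poly_R_eq: "poly R x = d h * d (h+1) * (poly (Q h) x - (x + e h) * (x + e (h+1)))"
  by (simp add: smult_Q_minus_P_P_eq_R[of h, symmetric] P_def Q_def algebra_simps)

lemma R_dvd_Q_minus_P_P: "R dvd Q h - P h * P (h+1)"
proof -
  have "smult (d h * d (h+1)) (Q h - P h * P (h+1)) dvd Q h - P h * P (h+1)"
    by (rule smult_dvd[OF dvd_refl]) (simp add: d_nonzero)
  then show ?thesis
    by (simp only: smult_Q_minus_P_P_eq_R)
qed

lemma Q_eq_P_L: "Q h = P h * L (h-1) - [:d (h-1):]"
  using Q_succ[of "h-1"] by simp

lemma poly_Q_neg_e: "poly (Q h) (- e h) = - d (h-1)"
  by (simp add: Q_eq_P_L P_def)

lemma poly_R_neg_e: "poly R (- e h) = - (d (h-1) * d h * d (h+1))"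
  using poly_R_eq[of "- e h" h] by (simp add: poly_Q_neg_e algebra_simps)

lemma Q_pred: "Q (h-1) = P h * L h - [:d (h+1):]"
proof -
  have "- vv h = e h + vv (h-1)"
    using arg_cong[OF Q_eq_P_L[of h], of "\<lambda>p. coeff p 1"] by (simp add: P_def Q_def L_def)
  then have vv_pred: "vv (h-1) = - e h - vv h"
    by algebra
  have "(d (h-1) * d h) * poly (Q (h-1)) (- e h) = (d (h-1) * d h) * (- d (h+1))"
    using poly_R_eq[of "- e h" "h-1"] by (simp add: poly_R_neg_e)
  moreover have "d (h-1) * d h \<noteq> 0"
    by (simp add: d_nonzero)
  ultimately have "poly (Q (h-1)) (- e h) = - d (h+1)"
    using mult_left_cancel by blast
  then have ww_pred: "ww (h-1) = e h * vv h - d (h+1)"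
    unfolding Q_def vv_pred by (simp add: algebra_simps)
  show ?thesis
    by (simp add: P_def Q_def L_def vv_pred ww_pred)
qed

lemma R_dvd_cubic_minus_P_P_P: "R dvd cubicA f g + smult (d h) (P h) - P (h-1) * P h * P (h+1)"
proof -
  have i: "cubicA f g + [:d h:] * P h + [:d (h+1):] * P (h+1) = L h * Q h"
    using cubic_eq_L_Q[of h] by (simp only: smult_eq_const_mult)
  have decomposition: "cubicA f g + smult (d h) (P h) - P (h-1) * P h * P (h+1)
      = L h * (Q h - P h * P (h+1)) + P (h+1) * (Q (h-1) - P (h-1) * P h)"
    unfolding Q_pred smult_eq_const_mult using i by algebra
  have "R dvd Q (h-1) - P (h-1) * P h"
    using R_dvd_Q_minus_P_P[of "h-1"] by simp
  then show ?thesis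
    unfolding decomposition by (intro dvd_add dvd_mult R_dvd_Q_minus_P_P)
qed

lemma poly_cubic_at_root:
  assumes "poly R x = 0"
  shows "poly (cubicA f g) x + d h * (x + e h) = (x + e (h-1)) * (x + e h) * (x + e (h+1))"
proof -
  obtain k where "cubicA f g + smult (d h) (P h) - P (h-1) * P h * P (h+1) = R * k"
    using R_dvd_cubic_minus_P_P_P by (rule dvdE)
  then have "poly (cubicA f g + smult (d h) (P h) - P (h-1) * P h * P (h+1)) x = 0"
    using assms by simp
  then show ?thesis
    by (simp add: P_def algebra_simps)
qed

end

theorem mainTheorem9:
  fixes f g v w :: "'a::field"
    and u vv ww d e :: "int \<Rightarrow> 'a"
    and R :: "'a poly"
  assumes char2: "(2::'a) \<noteq> 0"
    and char3: "(3::'a) \<noteq> 0"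
    and R_def: "R = - smult v [:- w, 1:]"
    and u_nz: "\<And>h. u h \<noteq> 0"
    and iden_i: "\<And>h. cubicA f g + smult (d h) [:e h, 1:] + smult (d (h+1)) [:e (h+1), 1:]
                 = [:vv h, 1:] * [:ww h, - vv h, 1:]"
    and iden_ii: "\<And>h. - smult (u h * u (h+1)) ([:ww h, - vv h, 1:] * [:ww (h+1), - vv (h+1), 1:])
                 = smult ((d (h+1))\<^sup>2) ([:e (h+1), 1:]\<^sup>2) + smult (d (h+1)) [:e (h+1), 1:] * cubicA f g - R"
  shows "d (h-2) * (d (h-1))\<^sup>2 * (d h)^3 * (d (h+1))\<^sup>2 * d (h+2)
           = - (v^3) * ((g + d h * e h) + w * (f + d h) + w^3)
       \<and> - (v^3) * ((g + d h * e h) + w * (f + d h) + w^3)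
           = v\<^sup>2 * d (h-1) * (d h)\<^sup>2 * d (h+1) - v^3 * (g + w * f + w^3)"
proof -
  have "degree R \<le> 1"
    by (simp add: R_def)
  then interpret complete_quotients f g R u vv ww d e
    using u_nz iden_i iden_ii by unfold_locales
  have v_e: "v * (w + e k) = - (d (k-1) * d k * d (k+1))" for k
    using poly_R_neg_e[of k] by (simp add: R_def algebra_simps)
  have v_e_pred: "v * (w + e (h-1)) = - (d (h-2) * d (h-1) * d h)"
    using v_e[of "h-1"] by simp
  have v_e_succ: "v * (w + e (h+1)) = - (d h * d (h+1) * d (h+2))"
    using v_e[of "h+1"] by (simp add: add.assoc)
  have cubic: "(g + d h * e h) + w * (f + d h) + w^3 = (w + e (h-1)) * (w + e h) * (w + e (h+1))"
    using poly_cubic_at_root[of w h] by (simp add: R_def cubicA_def algebra_simps power3_eq_cube)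
  show ?thesis
    using v_e_pred v_e[of h] v_e_succ cubic by algebra
qed

end
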